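(* Let $1\leq\alpha,\beta<\omega$, let $P$ be a poset and $n\in\omega$. Then $P\models\psi_{\alpha\beta n}$ if and only if for all $p,q\in P$ with $p\not\leq q$, $\exists$ has an $n$-strategy for the $(\alpha+1,\beta+1)$-game with starting position $(\{p\},\{q\})$.
   Context: Work in the first-order signature with one binary relation $\leq$; write $\vec{x}_k=(x_1,\ldots,x_k)$. For $1\leq k<\omega$: $J_k(\vec{x}_k,y)$ holds under assignment $v$ iff $v(y)$ is the join of $\{v(x_1),\ldots,v(x_k)\}$, $M_k(\vec{x}_k,y)$ iff $v(y)$ is their meet; $C_k(\vec{x}_k,y)=\bigvee_{i=1}^k(y=x_i)$, $D_k=\neg C_k$; $C_{km}(\vec{x}_k,\vec{y}_m)$ holds iff $\{v(y_j)\}\subseteq\{v(x_i)\}$. Let $\sigma_k(\vec{x}_k,c)=\exists z(C_k(\vec{x}_k,z)\wedge z\leq c)$, $\tau_{kr}(\vec{x}_k,\vec{a}_r,c)=C_{kr}(\vec{x}_k,\vec{a}_r)\wedge M_r(\vec{a}_r,c)$, $\rho_{ks}(\vec{x}_k,\vec{b}_s)=\exists z(C_k(\vec{x}_k,z)\wedge J_s(\vec{b}_s,z))$. Define $\phi_{krs0}(\vec{x}_k,y)=D_k(\vec{x}_k,y)$ and $\phi_{krs(n+1)}(\vec{x}_k,y)=\forall\vec{a}_r\forall\vec{b}_s\forall c\Big(\big(\sigma_k(\vec{x}_k,c)\to\phi_{(k+1)rsn}(\vec{x}_k,c,y)\big)\wedge\big(\tau_{kr}(\vec{x}_k,\vec{a}_r,c)\to\phi_{(k+1)rsn}(\vec{x}_k,c,y)\big)\wedge\big(\rho_{ks}(\vec{x}_k,\vec{b}_s)\to\bigvee_{i=1}^s\phi_{(k+1)rsn}(\vec{x}_k,b_i,y)\big)\Big)$,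 and $\psi_{rsn}=\forall x\forall y(\neg(x\leq y)\to\phi_{1rsn}(x,y))$. The $(\alpha,\beta)$-game on $P$ with starting position $(U_0,V)$ is played between $\forall$ and $\exists$ in rounds $0,1,2,\ldots$ with a set $U$, initially $U_0$, and $V$ fixed. Each round $\forall$ moves and $\exists$ responds: (1) if $b\geq a$ for some $a\in U$, $\forall$ may play $(b)$ and $\exists$ must add $b$ to $U$; (2) if $A\subseteq U$ with $|A|<\alpha$ and $\bigwedge A$ exists, $\forall$ may play $A$ and $\exists$ must add $\bigwedge A$; (3) if $B\subseteq P$ with $|B|<\beta$ and $\bigvee B$ exists and lies in $U$, $\forall$ may play $B$ and $\exists$ must choose some $b\in B$ and add it to $U$. $\forall$ wins in round $n$ if $U\cap V\neq\emptyset$ at the beginning of round $n$; $\exists$ has an $n$-strategy if she can guarantee that $\forall$ does not win until at least round $n+1$. *)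

theory Defs
  imports Main
begin

text \<open>Posets are modelled by the type class order: the poset P is the universe of
the type 'a with its order. Tuples \<open>x_1..x_k\<close> are lists.\<close>

definition is_join :: "'a::order set \<Rightarrow> 'a \<Rightarrow> bool" where
  "is_join S y \<longleftrightarrow> (\<forall>x\<in>S. x \<le> y) \<and> (\<forall>z. (\<forall>x\<in>S. x \<le> z) \<longrightarrow> y \<le> z)"

definition is_meet :: "'a::order set \<Rightarrow> 'a \<Rightarrow> bool" where
  "is_meet S y \<longleftrightarrow> (\<forall>x\<in>S. y \<le> x) \<and> (\<forall>z. (\<forall>x\<in>S. z \<le> x) \<longrightarrow> z \<le> y)"

definition J_f :: "'a::order list \<Rightarrow> 'a \<Rightarrow> bool" where
  "J_f xs y \<longleftrightarrow> is_join (set xs) y"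

definition M_f :: "'a::order list \<Rightarrow> 'a \<Rightarrow> bool" where
  "M_f xs y \<longleftrightarrow> is_meet (set xs) y"

definition C_f :: "'a list \<Rightarrow> 'a \<Rightarrow> bool" where
  "C_f xs y \<longleftrightarrow> (\<exists>i<length xs. y = xs ! i)"

definition D_f :: "'a list \<Rightarrow> 'a \<Rightarrow> bool" where
  "D_f xs y \<longleftrightarrow> \<not> C_f xs y"

definition C2_f :: "'a list \<Rightarrow> 'a list \<Rightarrow> bool" where
  "C2_f xs ys \<longleftrightarrow> set ys \<subseteq> set xs"

definition sigma_f :: "'a::order list \<Rightarrow> 'a \<Rightarrow> bool" where
  "sigma_f xs c \<longleftrightarrow> (\<exists>z. C_f xs z \<and> z \<le> c)"

definition tau_f :: "'a::order list \<Rightarrow> 'a list \<Rightarrow> 'a \<Rightarrow> bool" where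
  "tau_f xs as c \<longleftrightarrow> C2_f xs as \<and> M_f as c"

definition rho_f :: "'a::order list \<Rightarrow> 'a list \<Rightarrow> bool" where
  "rho_f xs bs \<longleftrightarrow> (\<exists>z. C_f xs z \<and> J_f bs z)"

text \<open>\<open>phi r s n xs y\<close> is the truth value of \<open>\<phi>_{k r s n}(x_1..x_k, y)\<close> with k = length xs.\<close>

fun phi :: "nat \<Rightarrow> nat \<Rightarrow> nat \<Rightarrow> 'a::order list \<Rightarrow> 'a \<Rightarrow> bool" where
  "phi r s 0 xs y = D_f xs y"
| "phi r s (Suc n) xs y =
     (\<forall>as bs c. length as = r \<and> length bs = s \<longrightarrow>
        (sigma_f xs c \<longrightarrow> phi r s n (xs @ [c]) y) \<and>
        (tau_f xs as c \<longrightarrow> phi r s n (xs @ [c]) y) \<and>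
        (rho_f xs bs \<longrightarrow> (\<exists>i<s. phi r s n (xs @ [bs ! i]) y)))"

definition psi :: "nat \<Rightarrow> nat \<Rightarrow> nat \<Rightarrow> 'a::order itself \<Rightarrow> bool" where
  "psi r s n (_ :: 'a itself) \<longleftrightarrow> (\<forall>x y :: 'a. \<not> x \<le> y \<longrightarrow> phi r s n [x] y)"

text \<open>The (alpha,beta)-game: possible responses of \<exists> to a move of \<forall>.
  \<open>estrat \<alpha> \<beta> n U V\<close>: \<exists> has an n-strategy from position (U,V), i.e. she can
  guarantee that U \<inter> V = {} at the beginning of rounds 0..n. If she has no legal
  response to a move, she has no strategy.\<close>

fun estrat :: "nat \<Rightarrow> nat \<Rightarrow> nat \<Rightarrow> 'a::order set \<Rightarrow> 'a set \<Rightarrow> bool" where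
  "estrat \<alpha> \<beta> 0 U V = (U \<inter> V = {})"
| "estrat \<alpha> \<beta> (Suc n) U V =
     (U \<inter> V = {} \<and>
      (\<forall>b. (\<exists>a\<in>U. a \<le> b) \<longrightarrow> estrat \<alpha> \<beta> n (insert b U) V) \<and>
      (\<forall>A m. A \<subseteq> U \<and> finite A \<and> card A < \<alpha> \<and> is_meet A m \<longrightarrow>
             estrat \<alpha> \<beta> n (insert m U) V) \<and>
      (\<forall>B j. finite B \<and> card B < \<beta> \<and> is_join B j \<and> j \<in> U \<longrightarrow>
             (\<exists>b\<in>B. estrat \<alpha> \<beta> n (insert b U) V)))"

end

theory Submission
  imports Defs
begin

text \<open>By induction on \<open>n\<close>, for every nonempty tuple \<open>xs\<close>, \<open>\<phi>_{k r s n}(xs, y)\<close> holds iff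
  \<open>\<exists>\<close> has an \<open>n\<close>-strategy from \<open>(set xs, {y})\<close> in the \<open>(r+1, s+1)\<close>-game: the three
  conjuncts of \<open>\<phi>\<close> are exactly the three kinds of moves of \<open>\<forall>\<close>, with \<open>\<sigma>\<close>, \<open>\<tau>\<close>, \<open>\<rho>\<close>
  describing when they are legal. Tuples of length \<open>r\<close> range over the nonempty sets of
  size at most \<open>r\<close>; the moves with an empty set of elements are redundant, since the top
  element lies above any element of \<open>U\<close>, and a bottom element in \<open>U\<close> lets \<open>\<forall>\<close> win at once
  by playing \<open>y\<close>.\<close>

lemma C_f_iff_in_set: "C_f xs y \<longleftrightarrow> y \<in> set xs"
  by (auto simp: C_f_def in_set_conv_nth)

lemma ex_list_length_set_iff:
  "(\<exists>l. length l = k \<and> set l = A) \<longleftrightarrow> finite A \<and> card A \<le> k \<and> (A = {} \<longrightarrow> k = 0)"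
proof
  assume "\<exists>l. length l = k \<and> set l = A"
  then show "finite A \<and> card A \<le> k \<and> (A = {} \<longrightarrow> k = 0)"
    using card_length by auto
next
  assume A: "finite A \<and> card A \<le> k \<and> (A = {} \<longrightarrow> k = 0)"
  then obtain l where l: "set l = A" "distinct l"
    using finite_distinct_list by blast
  then have "length l = card A"
    by (metis distinct_card)
  then have "length (l @ replicate (k - length l) (hd l)) = k
      \<and> set (l @ replicate (k - length l) (hd l)) = A"
    using A l by (cases l) auto
  then show "\<exists>l. length l = k \<and> set l = A" ..
qed

lemma all_lists_length_iff_all_sets:
  assumes "1 \<le> k"
  shows "(\<forall>l. length l = k \<longrightarrow> P (set l)) \<longleftrightarrow>
         (\<forall>A. A \<noteq> {} \<and> finite A \<and> card A \<le> k \<longrightarrow> P A)"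
  using ex_list_length_set_iff[of k] assms by (metis not_one_le_zero)

lemma phi_imp_notin: "phi r s n xs y \<Longrightarrow> y \<notin> set xs"
proof (induction n arbitrary: xs)
  case 0
  then show ?case by (simp add: D_f_def C_f_iff_in_set)
next
  case (Suc n)
  show ?case
  proof
    assume "y \<in> set xs"
    then have "sigma_f xs y"
      by (auto simp: sigma_f_def C_f_iff_in_set)
    then have "phi r s n (xs @ [y]) y"
      using Suc.prems by (fastforce dest: spec[of _ "replicate r y"] spec[of _ "replicate s y"])
    then show False
      using Suc.IH[of "xs @ [y]"] by simp
  qed
qed

lemma phi_Suc_iff_moves:
  assumes "1 \<le> r" and "1 \<le> s"
  shows "phi r s (Suc n) xs y \<longleftrightarrow>
    (\<forall>c. (\<exists>a\<in>set xs. a \<le> c) \<longrightarrow> phi r s n (xs @ [c]) y) \<and>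
    (\<forall>A c. A \<noteq> {} \<and> finite A \<and> card A \<le> r \<and> A \<subseteq> set xs \<and> is_meet A c \<longrightarrow>
       phi r s n (xs @ [c]) y) \<and>
    (\<forall>B j. B \<noteq> {} \<and> finite B \<and> card B \<le> s \<and> is_join B j \<and> j \<in> set xs \<longrightarrow>
       (\<exists>b\<in>B. phi r s n (xs @ [b]) y))"
proof -
  have lists_exist: "\<exists>l. length l = k" for k :: nat
    by (metis length_replicate)
  have pick_nth: "(\<exists>i<s. phi r s n (xs @ [bs ! i]) y) \<longleftrightarrow> (\<exists>b\<in>set bs. phi r s n (xs @ [b]) y)"
    if "length bs = s" for bs
    using that by (force simp: in_set_conv_nth)
  have "phi r s (Suc n) xs y \<longleftrightarrow>
    (\<forall>c. sigma_f xs c \<longrightarrow> phi r s n (xs @ [c]) y) \<and>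
    (\<forall>as. length as = r \<longrightarrow> (\<forall>c. tau_f xs as c \<longrightarrow> phi r s n (xs @ [c]) y)) \<and>
    (\<forall>bs. length bs = s \<longrightarrow> rho_f xs bs \<longrightarrow> (\<exists>i<s. phi r s n (xs @ [bs ! i]) y))"
    using lists_exist[of r] lists_exist[of s] by auto
  moreover have "(\<forall>c. sigma_f xs c \<longrightarrow> phi r s n (xs @ [c]) y) \<longleftrightarrow>
    (\<forall>c. (\<exists>a\<in>set xs. a \<le> c) \<longrightarrow> phi r s n (xs @ [c]) y)"
    by (auto simp: sigma_f_def C_f_iff_in_set)
  moreover have "(\<forall>as. length as = r \<longrightarrow> (\<forall>c. tau_f xs as c \<longrightarrow> phi r s n (xs @ [c]) y)) \<longleftrightarrow>
    (\<forall>A c. A \<noteq> {} \<and> finite A \<and> card A \<le> r \<and> A \<subseteq> set xs \<and> is_meet A c \<longrightarrow>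
       phi r s n (xs @ [c]) y)"
    using all_lists_length_iff_all_sets[OF assms(1),
        where P = "\<lambda>A. \<forall>c. A \<subseteq> set xs \<and> is_meet A c \<longrightarrow> phi r s n (xs @ [c]) y"]
    by (simp add: tau_f_def C2_f_def M_f_def) blast
  moreover have "(\<forall>bs. length bs = s \<longrightarrow> rho_f xs bs \<longrightarrow> (\<exists>i<s. phi r s n (xs @ [bs ! i]) y)) \<longleftrightarrow>
    (\<forall>B j. B \<noteq> {} \<and> finite B \<and> card B \<le> s \<and> is_join B j \<and> j \<in> set xs \<longrightarrow>
       (\<exists>b\<in>B. phi r s n (xs @ [b]) y))"
    using all_lists_length_iff_all_sets[OF assms(2),
        where P = "\<lambda>B. \<forall>j. is_join B j \<and> j \<in> set xs \<longrightarrow> (\<exists>b\<in>B. phi r s n (xs @ [b]) y)"]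
    by (simp add: rho_f_def J_f_def C_f_iff_in_set pick_nth) blast
  ultimately show ?thesis
    by simp
qed

lemma estrat_imp_disjoint: "estrat \<alpha> \<beta> n U V \<Longrightarrow> U \<inter> V = {}"
  by (cases n) auto

lemma estrat_Suc_iff_nonempty_moves:
  assumes "U \<noteq> {}" and "V \<noteq> {}"
  shows "estrat \<alpha> \<beta> (Suc n) U V \<longleftrightarrow>
    U \<inter> V = {} \<and>
    (\<forall>b. (\<exists>a\<in>U. a \<le> b) \<longrightarrow> estrat \<alpha> \<beta> n (insert b U) V) \<and>
    (\<forall>A m. A \<noteq> {} \<and> finite A \<and> card A < \<alpha> \<and> A \<subseteq> U \<and> is_meet A m \<longrightarrow>
       estrat \<alpha> \<beta> n (insert m U) V) \<and>
    (\<forall>B j. B \<noteq> {} \<and> finite B \<and> card B < \<beta> \<and> is_join B j \<and> j \<in> U \<longrightarrow>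
       (\<exists>b\<in>B. estrat \<alpha> \<beta> n (insert b U) V))"
    (is "_ \<longleftrightarrow> _ \<and> ?up \<and> _ \<and> _")
proof -
  have empty_meet_move: "estrat \<alpha> \<beta> n (insert m U) V" if ?up "is_meet {} m" for m
  proof -
    obtain a where "a \<in> U" using assms(1) by blast
    with that show ?thesis by (auto simp: is_meet_def)
  qed
  have no_bottom_in_U: "j \<notin> U" if ?up "is_join {} j" for j
  proof
    assume "j \<in> U"
    obtain v where "v \<in> V" using assms(2) by blast
    with that \<open>j \<in> U\<close> have "estrat \<alpha> \<beta> n (insert v U) V"
      by (auto simp: is_join_def)
    with \<open>v \<in> V\<close> show False
      using estrat_imp_disjoint by blast
  qed
  have meet_moves: "(\<forall>A m. A \<subseteq> U \<and> finite A \<and> card A < \<alpha> \<and> is_meet A m \<longrightarrow>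
       estrat \<alpha> \<beta> n (insert m U) V) \<longleftrightarrow>
    (\<forall>A m. A \<noteq> {} \<and> finite A \<and> card A < \<alpha> \<and> A \<subseteq> U \<and> is_meet A m \<longrightarrow>
       estrat \<alpha> \<beta> n (insert m U) V)" if ?up
    using empty_meet_move[OF that] by metis
  have join_moves: "(\<forall>B j. finite B \<and> card B < \<beta> \<and> is_join B j \<and> j \<in> U \<longrightarrow>
       (\<exists>b\<in>B. estrat \<alpha> \<beta> n (insert b U) V)) \<longleftrightarrow>
    (\<forall>B j. B \<noteq> {} \<and> finite B \<and> card B < \<beta> \<and> is_join B j \<and> j \<in> U \<longrightarrow>
       (\<exists>b\<in>B. estrat \<alpha> \<beta> n (insert b U) V))" if ?up
    using no_bottom_in_U[OF that] by metis
  show ?thesis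
    by (simp only: estrat.simps meet_moves join_moves cong: conj_cong)
qed

lemma phi_iff_estrat:
  assumes "1 \<le> r" and "1 \<le> s" and "xs \<noteq> []"
  shows "phi r s n xs y \<longleftrightarrow> estrat (r + 1) (s + 1) n (set xs) {y}"
  using assms(3)
proof (induction n arbitrary: xs)
  case 0
  then show ?case by (simp add: D_f_def C_f_iff_in_set)
next
  case (Suc n)
  have IH: "phi r s n (xs @ [c]) y \<longleftrightarrow> estrat (r + 1) (s + 1) n (insert c (set xs)) {y}" for c
    using Suc.IH[of "xs @ [c]"] by simp
  have "set xs \<noteq> {}"
    using Suc.prems by simp
  note game_moves = estrat_Suc_iff_nonempty_moves[OF this insert_not_empty]
  have "phi r s (Suc n) xs y \<longleftrightarrow> set xs \<inter> {y} = {} \<and> phi r s (Suc n) xs y"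
    using phi_imp_notin by blast
  also have "\<dots> \<longleftrightarrow> estrat (r + 1) (s + 1) (Suc n) (set xs) {y}"
    unfolding phi_Suc_iff_moves[OF assms(1,2)] game_moves IH
    by (simp only: Suc_eq_plus1[symmetric] less_Suc_eq_le)
  finally show ?case .
qed

theorem proposition5p4:
  fixes \<alpha> \<beta> n :: nat
  assumes "1 \<le> \<alpha>" and "1 \<le> \<beta>"
  shows "psi \<alpha> \<beta> n TYPE('a::order) \<longleftrightarrow>
         (\<forall>p q :: 'a. \<not> p \<le> q \<longrightarrow> estrat (\<alpha> + 1) (\<beta> + 1) n {p} {q})"
  unfolding psi_def by (simp add: phi_iff_estrat[OF assms])

end
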